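(* Let $\tau\in(0,1)$, $C>\tau$, $\mu>0$, let $a:\mathbb{R}^+\to\mathbb{R}^+$ be continuous and bounded, $h(x)=\frac{x}{1+x}$, and $$d_1(t)=\mu\frac{t+C}{1-\tau},\qquad \beta(t)=\frac{t+C+1-\tau}{t+C}\Big(d_1(t)-\frac{1}{t+C}\Big).$$ Then the system $$x_1'(t)=-(a(t)+d_1(t))x_1(t)+a(t)x_2(t)+\beta(t)h(x_1(t-\tau)),\quad x_2'(t)=-(a(t)+d_1(t))x_2(t)+a(t)x_1(t)+\beta(t)h(x_2(t-\tau))$$ has the solution $x(t)=\big(\frac{1}{t+C},\frac{1}{t+C}\big)$, hence is not permanent, although $\beta(t)-d_1(t)\ge\mu/2$ for all sufficiently large $t$ (and $\beta$ is unbounded).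
   Context: Solutions are considered for $t\ge0$ with initial data on $[-\tau,0]$. *)

theory Defs
  imports "HOL-Analysis.Analysis"
begin

definition hfun :: "real \<Rightarrow> real" where
  "hfun x = x / (1 + x)"

definition d1 :: "real \<Rightarrow> real \<Rightarrow> real \<Rightarrow> real \<Rightarrow> real" where
  "d1 \<mu> \<tau> C t = \<mu> * (t + C) / (1 - \<tau>)"

definition beta :: "real \<Rightarrow> real \<Rightarrow> real \<Rightarrow> real \<Rightarrow> real" where
  "beta \<mu> \<tau> C t = (t + C + 1 - \<tau>) / (t + C) * (d1 \<mu> \<tau> C t - 1 / (t + C))"

definition is_solution ::
  "(real \<Rightarrow> real) \<Rightarrow> real \<Rightarrow> real \<Rightarrow> real \<Rightarrow> (real \<Rightarrow> real) \<Rightarrow> (real \<Rightarrow> real) \<Rightarrow> bool" where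
  "is_solution a \<mu> \<tau> C x1 x2 \<longleftrightarrow>
     continuous_on {-\<tau>..} x1 \<and> continuous_on {-\<tau>..} x2 \<and>
     (\<forall>t\<ge>0.
        (x1 has_real_derivative
           (-(a t + d1 \<mu> \<tau> C t) * x1 t + a t * x2 t + beta \<mu> \<tau> C t * hfun (x1 (t - \<tau>))))
          (at t within {0..}) \<and>
        (x2 has_real_derivative
           (-(a t + d1 \<mu> \<tau> C t) * x2 t + a t * x1 t + beta \<mu> \<tau> C t * hfun (x2 (t - \<tau>))))
          (at t within {0..}))"

definition permanent ::
  "(real \<Rightarrow> real) \<Rightarrow> real \<Rightarrow> real \<Rightarrow> real \<Rightarrow> bool" where
  "permanent a \<mu> \<tau> C \<longleftrightarrow>
     (\<exists>m M. 0 < m \<and> m \<le> M \<and>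
        (\<forall>x1 x2. is_solution a \<mu> \<tau> C x1 x2 \<and> (\<forall>s\<in>{-\<tau>..0}. x1 s > 0 \<and> x2 s > 0) \<longrightarrow>
           (\<forall>\<^sub>F t in at_top. m \<le> x1 t \<and> x1 t \<le> M \<and> m \<le> x2 t \<and> x2 t \<le> M)))"

end

theory Submission
  imports Defs
begin

text \<open>The coefficient \<open>\<beta>\<close> is chosen so that the delayed term exactly compensates:
  since \<open>h(1/v) = 1/(v+1)\<close>, for \<open>x = 1/(t+C)\<close> the delayed feedback
  \<open>\<beta>(t) h(x(t-\<tau>))\<close> equals \<open>(d\<^sub>1(t) - x(t)) x(t)\<close>, so the right-hand side collapses to \<open>-x(t)\<^sup>2 = x'(t)\<close>.\<close>

lemma hfun_inverse: "v > 0 \<Longrightarrow> hfun (1 / v) = 1 / (v + 1)"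
  by (simp add: hfun_def field_simps)

lemma beta_minus_d1:
  assumes "\<tau> \<noteq> 1" "t + C \<noteq> 0"
  shows "beta \<mu> \<tau> C t - d1 \<mu> \<tau> C t = \<mu> - (t + C + 1 - \<tau>) / (t + C)\<^sup>2"
proof -
  define u D where "u = t + C" and "D = d1 \<mu> \<tau> C t"
  have "u \<noteq> 0" "1 - \<tau> \<noteq> 0" using assms u_def by auto
  have "beta \<mu> \<tau> C t = (u + 1 - \<tau>) / u * (D - 1 / u)"
    unfolding beta_def D_def u_def by (simp add: add.assoc)
  also have "\<dots> = D + D * (1 - \<tau>) / u - (u + 1 - \<tau>) / u\<^sup>2"
    using \<open>u \<noteq> 0\<close> by (simp add: field_simps power2_eq_square)
  also have "D * (1 - \<tau>) = \<mu> * u"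
    using \<open>1 - \<tau> \<noteq> 0\<close> unfolding D_def d1_def u_def by simp
  finally show ?thesis using \<open>u \<noteq> 0\<close> unfolding D_def u_def by simp
qed

lemma beta_times_hfun_reciprocal:
  assumes "t + C - \<tau> > 0"
  shows "beta \<mu> \<tau> C t * hfun (1 / (t - \<tau> + C)) = (d1 \<mu> \<tau> C t - 1 / (t + C)) / (t + C)"
proof -
  have "hfun (1 / (t - \<tau> + C)) = 1 / (t + C + 1 - \<tau>)"
    using assms hfun_inverse[of "t - \<tau> + C"] by (simp add: algebra_simps)
  moreover have "t + C + 1 - \<tau> \<noteq> 0" using assms by simp
  ultimately show ?thesis unfolding beta_def by simp
qed

lemma reciprocal_is_solution:
  assumes "0 \<le> \<tau>" "\<tau> < C"
  shows "is_solution a \<mu> \<tau> C (\<lambda>t. 1 / (t + C)) (\<lambda>t. 1 / (t + C))"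
proof -
  have "continuous_on {-\<tau>..} (\<lambda>t. 1 / (t + C))"
    using assms by (intro continuous_intros) auto
  moreover have "((\<lambda>t. 1 / (t + C)) has_real_derivative
      -(a t + d1 \<mu> \<tau> C t) * (1 / (t + C)) + a t * (1 / (t + C))
        + beta \<mu> \<tau> C t * hfun (1 / (t - \<tau> + C))) (at t within {0..})"
    if "t \<ge> 0" for t
  proof -
    have pos: "t + C > 0" "t + C - \<tau> > 0" using that assms by auto
    have "-(a t + d1 \<mu> \<tau> C t) * (1 / (t + C)) + a t * (1 / (t + C))
          + beta \<mu> \<tau> C t * hfun (1 / (t - \<tau> + C)) = - 1 / (t + C)\<^sup>2"
    proof -
      have "-(A + D) * (1 / u) + A * (1 / u) + (D - 1 / u) / u = - 1 / u\<^sup>2"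
        if "u > 0" for A D u :: real
        using that by (simp add: field_simps power2_eq_square)
      then show ?thesis unfolding beta_times_hfun_reciprocal[OF pos(2)] using pos(1) .
    qed
    moreover have "((\<lambda>t. 1 / (t + C)) has_real_derivative - 1 / (t + C)\<^sup>2) (at t)"
      using pos by (auto intro!: derivative_eq_intros simp: power2_eq_square)
    ultimately show ?thesis by (simp add: has_field_derivative_at_within)
  qed
  ultimately show ?thesis unfolding is_solution_def by (simp add: algebra_simps)
qed

lemma not_permanent_if_vanishing_solution:
  assumes "is_solution a \<mu> \<tau> C x x" "\<forall>s\<in>{-\<tau>..0}. x s > 0" "(x \<longlongrightarrow> 0) at_top"
  shows "\<not> permanent a \<mu> \<tau> C"
proof
  assume "permanent a \<mu> \<tau> C"
  then obtain m M where "m > 0"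
    and bounds: "\<forall>\<^sub>F t in at_top. m \<le> x t \<and> x t \<le> M \<and> m \<le> x t \<and> x t \<le> M"
    unfolding permanent_def using assms(1,2) by blast
  have "\<forall>\<^sub>F t in at_top. x t < m"
    using order_tendstoD(2)[OF assms(3) \<open>m > 0\<close>] .
  with bounds have "\<forall>\<^sub>F (t::real) in at_top. False"
    by eventually_elim simp
  then show False by simp
qed

lemma beta_minus_d1_ge_half_mu:
  assumes "\<tau> > 0" "\<tau> < 1" "\<mu> > 0" "t + C \<ge> 1" "t + C \<ge> 4 / \<mu>"
  shows "beta \<mu> \<tau> C t - d1 \<mu> \<tau> C t \<ge> \<mu> / 2"
proof -
  define u where "u = t + C"
  have "u > 0" using assms(4) u_def by simp
  have "(u + 1 - \<tau>) / u\<^sup>2 \<le> (2 * u) / u\<^sup>2"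
    using assms u_def by (intro divide_right_mono) auto
  also have "\<dots> = 2 / u" using \<open>u > 0\<close> by (simp add: power2_eq_square)
  also have "\<dots> \<le> \<mu> / 2" using assms u_def \<open>u > 0\<close> by (simp add: field_simps)
  finally show ?thesis
    using beta_minus_d1[of \<tau> t C \<mu>] assms unfolding u_def by simp
qed

lemma eventually_beta_minus_d1_ge_half_mu:
  assumes "\<tau> > 0" "\<tau> < 1" "\<mu> > 0"
  shows "\<forall>\<^sub>F t in at_top. beta \<mu> \<tau> C t - d1 \<mu> \<tau> C t \<ge> \<mu> / 2"
  unfolding eventually_at_top_linorder
  by (rule exI[of _ "max 1 (4 / \<mu>) - C"]) (use beta_minus_d1_ge_half_mu assms in force)

lemma filterlim_add_const_at_top: "filterlim (\<lambda>t::real. t + c) at_top at_top"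
  using filterlim_tendsto_add_at_top[OF tendsto_const filterlim_ident, of c]
  by (simp add: add.commute)

lemma d1_tendsto_at_top:
  assumes "\<tau> < 1" "\<mu> > 0"
  shows "filterlim (d1 \<mu> \<tau> C) at_top at_top"
proof -
  have "filterlim (\<lambda>t. \<mu> / (1 - \<tau>) * (t + C)) at_top (at_top :: real filter)"
    using assms by (intro filterlim_tendsto_pos_mult_at_top[OF tendsto_const _
        filterlim_add_const_at_top]) auto
  then show ?thesis unfolding d1_def[abs_def] by (simp add: field_simps)
qed

lemma beta_unbounded:
  assumes "\<tau> > 0" "\<tau> < 1" "\<mu> > 0"
  shows "\<not> bdd_above (beta \<mu> \<tau> C ` {0..})"
proof
  assume "bdd_above (beta \<mu> \<tau> C ` {0..})"
  then obtain B where B: "\<And>t. t \<ge> 0 \<Longrightarrow> beta \<mu> \<tau> C t \<le> B"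
    unfolding bdd_above_def by auto
  have "\<forall>\<^sub>F t in at_top. d1 \<mu> \<tau> C t > B"
    using d1_tendsto_at_top[OF assms(2,3)] by (simp add: filterlim_at_top_dense)
  then have "\<forall>\<^sub>F t in at_top. d1 \<mu> \<tau> C t > B \<and> beta \<mu> \<tau> C t - d1 \<mu> \<tau> C t \<ge> \<mu> / 2 \<and> t \<ge> 0"
    using eventually_beta_minus_d1_ge_half_mu[OF assms] eventually_ge_at_top
    by (intro eventually_conj)
  then obtain t where "d1 \<mu> \<tau> C t > B" "beta \<mu> \<tau> C t - d1 \<mu> \<tau> C t \<ge> \<mu> / 2" "t \<ge> 0"
    using eventually_happens'[of "at_top :: real filter"] by auto
  then show False using B[of t] assms(3) by linarith
qed

lemma reciprocal_tendsto_0: "((\<lambda>t::real. 1 / (t + C)) \<longlongrightarrow> 0) at_top"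
  using tendsto_inverse_0_at_top[OF filterlim_add_const_at_top] by (simp add: inverse_eq_divide)

theorem mainTheorem11:
  fixes \<tau> C \<mu> :: real and a :: "real \<Rightarrow> real"
  assumes "0 < \<tau>" "\<tau> < 1" "C > \<tau>" "\<mu> > 0"
    and "continuous_on {0..} a" "\<forall>t\<ge>0. a t > 0" "bounded (a ` {0..})"
  shows "is_solution a \<mu> \<tau> C (\<lambda>t. 1 / (t + C)) (\<lambda>t. 1 / (t + C))
    \<and> (\<forall>s\<in>{-\<tau>..0}. 1 / (s + C) > 0)
    \<and> ((\<lambda>t. 1 / (t + C)) \<longlongrightarrow> 0) at_top
    \<and> \<not> permanent a \<mu> \<tau> C
    \<and> (\<forall>\<^sub>F t in at_top. beta \<mu> \<tau> C t - d1 \<mu> \<tau> C t \<ge> \<mu> / 2)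
    \<and> \<not> bdd_above (beta \<mu> \<tau> C ` {0..})"
proof -
  have sol: "is_solution a \<mu> \<tau> C (\<lambda>t. 1 / (t + C)) (\<lambda>t. 1 / (t + C))"
    using reciprocal_is_solution[OF less_imp_le[OF assms(1)] assms(3)] .
  have pos: "\<forall>s\<in>{-\<tau>..0}. 1 / (s + C) > 0" using assms(3) by auto
  show ?thesis
    using sol pos reciprocal_tendsto_0
      not_permanent_if_vanishing_solution[OF sol pos reciprocal_tendsto_0]
      eventually_beta_minus_d1_ge_half_mu[OF assms(1,2,4)] beta_unbounded[OF assms(1,2,4)]
    by blast
qed

end
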